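(* For $k=1,2,3$ let $F_k(s)=C_k(sI-A_k)^{-1}B_k$ be strictly proper transfer functions with complex matrices $A_k,B_k,C_k$ of compatible dimensions and $A_k$ Hurwitz. Let $Q_{12}$ and $P_{23}$ be the unique solutions of the Sylvester equations $$A_1^*Q_{12}+Q_{12}A_2+C_1^*C_2=0,\qquad A_2P_{23}+P_{23}A_3^*+B_2B_3^*=0 .$$ Then $$\mathbf M(F_1,F_2,F_3):=\frac1{2\pi}\int_{\mathbb R}F_1(i\lambda)^*F_2(i\lambda)F_3(i\lambda)^*\,d\lambda=B_1^*Q_{12}P_{23}C_3^* .$$
   Context: $(\cdot)^*$ is the conjugate transpose; dimensions are such that the products $F_1^*F_2F_3^*$, $C_1^*C_2$, $B_2B_3^*$ are defined. *)

theory Defs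
  imports "HOL-Analysis.Analysis"
begin

definition ctrans :: "complex^'n^'m \<Rightarrow> complex^'m^'n" where
  "ctrans A = (\<chi> i j. cnj (A $ j $ i))"

definition is_eigenvalue :: "complex^'n^'n \<Rightarrow> complex \<Rightarrow> bool" where
  "is_eigenvalue A \<mu> \<longleftrightarrow> (\<exists>v. v \<noteq> 0 \<and> A *v v = \<mu> *s v)"

definition hurwitz :: "complex^'n^'n \<Rightarrow> bool" where
  "hurwitz A \<longleftrightarrow> (\<forall>\<mu>. is_eigenvalue A \<mu> \<longrightarrow> Re \<mu> < 0)"

definition tf :: "complex^'n^'n \<Rightarrow> complex^'m^'n \<Rightarrow> complex^'n^'p \<Rightarrow> complex \<Rightarrow> complex^'m^'p" where
  "tf A B C s = C ** matrix_inv (mat s - A) ** B"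

end

theory Submission
  imports Defs "HOL-Complex_Analysis.Cauchy_Integral_Formula" "HOL-Probability.Sinc_Integral"
begin

text \<open>
  On the imaginary axis \<open>s = i\<lambda>\<close> one has \<open>F\<^sub>k(s)\<^sup>* = B\<^sub>k\<^sup>* S\<^sub>k C\<^sub>k\<^sup>*\<close> with
  \<open>S\<^sub>k = (-s - A\<^sub>k\<^sup>*)\<^sup>-\<^sup>1\<close>, while \<open>F\<^sub>2(s) = C\<^sub>2 R\<^sub>2 B\<^sub>2\<close> with \<open>R\<^sub>2 = (s - A\<^sub>2)\<^sup>-\<^sup>1\<close>.
  The Sylvester equations say exactly that
  \<open>C\<^sub>1\<^sup>* C\<^sub>2 = (-s - A\<^sub>1\<^sup>*) Q\<^sub>1\<^sub>2 + Q\<^sub>1\<^sub>2 (s - A\<^sub>2)\<close> and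
  \<open>B\<^sub>2 B\<^sub>3\<^sup>* = (s - A\<^sub>2) P\<^sub>2\<^sub>3 + P\<^sub>2\<^sub>3 (-s - A\<^sub>3\<^sup>*)\<close>, so the integrand becomes
  \<open>B\<^sub>1\<^sup>* (Q\<^sub>1\<^sub>2 P\<^sub>2\<^sub>3 S\<^sub>3 + Q\<^sub>1\<^sub>2 R\<^sub>2 P\<^sub>2\<^sub>3 + S\<^sub>1 Q\<^sub>1\<^sub>2 B\<^sub>2 B\<^sub>3\<^sup>* S\<^sub>3) C\<^sub>3\<^sup>*\<close>.
  By the resolvent identity \<open>R\<^sub>2 = 1/(s+1) + R\<^sub>2 (A\<^sub>2 + I) / (s+1)\<close>, and likewise for \<open>S\<^sub>3\<close>,
  the first two terms contribute the scalar \<open>1/(1+s) + 1/(1-s) = 2/(1+\<lambda>\<^sup>2)\<close> times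
  \<open>B\<^sub>1\<^sup>* Q\<^sub>1\<^sub>2 P\<^sub>2\<^sub>3 C\<^sub>3\<^sup>*\<close>, whose integral is \<open>2\<pi>\<close> times the claimed value.
  Every remaining term is a product of two resolvents of Hurwitz matrices, hence holomorphic on a
  closed half plane and \<open>O(|s|\<^sup>-\<^sup>2)\<close> there, so Cauchy's theorem on half discs makes its
  integral along the imaginary axis vanish.
\<close>

section \<open>Matrix algebra\<close>

lemma matrix_add_rdistrib: "((A::'a::semiring_1^'n^'m) + B) ** C = A ** C + B ** C"
  by (vector matrix_matrix_mult_def sum.distrib[symmetric] field_simps)

lemma matrix_diff_ldistrib: "(A::'a::ring_1^'n^'m) ** (B - C) = A ** B - A ** C"
  by (vector matrix_matrix_mult_def sum_subtractf[symmetric] field_simps)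

lemma matrix_diff_rdistrib: "((A::'a::ring_1^'n^'m) - B) ** C = A ** C - B ** C"
  by (vector matrix_matrix_mult_def sum_subtractf[symmetric] field_simps)

lemma mat_matrix_mult: "mat c ** (M::'a::semiring_1^'n^'m) = (\<chi> i j. c * M$i$j)"
  unfolding matrix_matrix_mult_def mat_def
  by (auto simp: vec_eq_iff if_distrib if_distribR sum.delta cong: if_cong)

lemma matrix_mult_mat: "(M::'a::semiring_1^'n^'m) ** mat c = (\<chi> i j. M$i$j * c)"
  unfolding matrix_matrix_mult_def mat_def
  by (auto simp: vec_eq_iff if_distrib if_distribR sum.delta' cong: if_cong)

lemma mat_vector_mult: "mat c *v x = c *s (x::'a::semiring_1^'n)"
  by (simp add: vec_eq_iff matrix_vector_mult_def mat_def if_distrib if_distribR sum.delta cong: if_cong)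

lemma mat_add: "mat a + mat b = (mat (a + b) :: 'a::semiring_1^'n^'n)"
  by (vector mat_def)

lemma mat_mult: "mat a ** mat b = (mat (a * b) :: 'a::semiring_1^'n^'n)"
  by (simp add: mat_matrix_mult) (vector mat_def)

lemma mat_of_real_mult: "mat (of_real r) ** (M::complex^'n^'m) = r *\<^sub>R M"
  by (simp add: mat_matrix_mult vec_eq_iff scaleR_conv_of_real[where 'a=complex])

lemma mat_mult_commute: "mat c ** (M::'a::comm_semiring_1^'n^'m) = M ** mat c"
  by (simp add: mat_matrix_mult matrix_mult_mat mult.commute)

lemma matrix_mult_mat_commute: "A ** mat c ** (B::'a::comm_semiring_1^'n^'m) = A ** B ** mat c"
  by (simp add: mat_mult_commute flip: matrix_mul_assoc)

lemma
  assumes "invertible (M::'a::semiring_1^'n^'m)"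
  shows matrix_inv_right: "M ** matrix_inv M = mat 1"
    and matrix_inv_left: "matrix_inv M ** M = mat 1"
proof -
  have "\<exists>M'. M ** M' = mat 1 \<and> M' ** M = mat 1"
    using assms by (simp add: invertible_def)
  then have "M ** matrix_inv M = mat 1 \<and> matrix_inv M ** M = mat 1"
    unfolding matrix_inv_def by (rule someI_ex)
  then show "M ** matrix_inv M = mat 1" "matrix_inv M ** M = mat 1"
    by auto
qed

lemma matrix_inv_unique:
  assumes "(A::'a::semiring_1^'n^'m) ** B = mat 1" "B ** A = mat 1"
  shows "matrix_inv A = B"
proof -
  have "invertible A" using assms by (auto simp: invertible_def)
  have "matrix_inv A = matrix_inv A ** (A ** B)" using assms by simp
  also have "\<dots> = (matrix_inv A ** A) ** B" by (rule matrix_mul_assoc)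
  also have "\<dots> = B" using matrix_inv_left[OF \<open>invertible A\<close>] by simp
  finally show ?thesis .
qed

lemma matrix_inv_mat: "(c::'a::field) \<noteq> 0 \<Longrightarrow> matrix_inv (mat c :: 'a^'n^'n) = mat (1/c)"
  by (rule matrix_inv_unique) (simp_all add: mat_mult)

lemma invertible_mat: "(c::'a::field) \<noteq> 0 \<Longrightarrow> invertible (mat c :: 'a^'n^'n)"
  unfolding invertible_def by (intro exI[of _ "mat (1/c)"]) (simp add: mat_mult)

lemma ctrans_mult: "ctrans ((A::complex^'n^'m) ** B) = ctrans B ** ctrans A"
  by (simp add: ctrans_def matrix_matrix_mult_def vec_eq_iff mult.commute)

lemma ctrans_diff: "ctrans (A - B) = ctrans A - ctrans B"
  by (simp add: ctrans_def vec_eq_iff)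

lemma ctrans_mat: "ctrans (mat c :: complex^'n^'n) = mat (cnj c)"
  by (simp add: ctrans_def mat_def vec_eq_iff)

lemma
  assumes "invertible (M::complex^'n^'n)"
  shows invertible_ctrans: "invertible (ctrans M)"
    and ctrans_matrix_inv: "ctrans (matrix_inv M) = matrix_inv (ctrans M)"
proof -
  have "ctrans M ** ctrans (matrix_inv M) = mat 1" "ctrans (matrix_inv M) ** ctrans M = mat 1"
    using matrix_inv_right[OF assms] matrix_inv_left[OF assms] by (metis ctrans_mult ctrans_mat complex_cnj_one)+
  then show "invertible (ctrans M)" "ctrans (matrix_inv M) = matrix_inv (ctrans M)"
    by (auto simp: invertible_def matrix_inv_unique)
qed

section \<open>Hurwitz matrices and their resolvents\<close>

lemma invertible_iff_not_eigenvalue: "invertible (mat \<mu> - A) \<longleftrightarrow> \<not> is_eigenvalue A \<mu>"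
proof -
  have "(mat \<mu> - A) *v v = 0 \<longleftrightarrow> A *v v = \<mu> *s v" for v
    by (auto simp: matrix_vector_mult_diff_rdistrib mat_vector_mult)
  then show ?thesis
    by (auto simp: is_eigenvalue_def invertible_left_inverse matrix_left_invertible_ker)
qed

lemma hurwitz_iff_invertible: "hurwitz A \<longleftrightarrow> (\<forall>s. Re s \<ge> 0 \<longrightarrow> invertible (mat s - A))"
  unfolding hurwitz_def invertible_iff_not_eigenvalue by (meson not_le)

lemma hurwitz_ctrans: "hurwitz A \<Longrightarrow> hurwitz (ctrans A)"
  unfolding hurwitz_iff_invertible
  by (metis complex_cnj_cnj cnj.simps(1) ctrans_diff ctrans_mat invertible_ctrans)

lemma hurwitz_minus_one: "hurwitz (- mat 1 :: complex^'n^'n)"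
proof -
  have "invertible (mat s - - mat 1 :: complex^'n^'n)" if "Re s \<ge> 0" for s
  proof -
    have "s + 1 \<noteq> 0" using that by (auto simp: complex_eq_iff)
    then show ?thesis by (simp add: mat_add invertible_mat)
  qed
  then show ?thesis by (simp add: hurwitz_iff_invertible)
qed

definition resolvent :: "complex^'n^'n \<Rightarrow> complex \<Rightarrow> complex^'n^'n" where
  "resolvent A s = matrix_inv (mat s - A)"

lemma resolvent_identity:
  assumes "invertible (mat s - X)" and "invertible (mat s - Y)"
  shows "resolvent X s = resolvent Y s + resolvent X s ** (X - Y) ** resolvent Y s"
proof -
  have "resolvent X s ** (mat s - Y) = resolvent X s ** (mat s - X) + resolvent X s ** (X - Y)"
    by (simp flip: matrix_add_ldistrib)
  also have "\<dots> = mat 1 + resolvent X s ** (X - Y)"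
    using matrix_inv_left[OF assms(1)] by (simp add: resolvent_def)
  finally have "resolvent X s ** ((mat s - Y) ** resolvent Y s)
      = (mat 1 + resolvent X s ** (X - Y)) ** resolvent Y s"
    by (simp add: matrix_mul_assoc)
  then show ?thesis
    using matrix_inv_right[OF assms(2)] by (simp add: resolvent_def matrix_add_rdistrib)
qed

lemma resolvent_minus_one:
  assumes "s \<noteq> -1"
  shows "resolvent (- mat 1 :: complex^'n^'n) s = mat (1 / (s + 1))"
proof -
  have "s + 1 \<noteq> 0" using assms by (metis eq_neg_iff_add_eq_0)
  then show ?thesis by (simp add: resolvent_def mat_add matrix_inv_mat)
qed

lemma hurwitz_resolvent_split:
  fixes X :: "complex^'n^'n"
  assumes "hurwitz X" and "Re s \<ge> 0"
  shows "resolvent X s = mat (1 / (s + 1)) + resolvent X s ** (X + mat 1) ** resolvent (- mat 1) s"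
proof -
  have "invertible (mat s - X)" "invertible (mat s - - mat 1 :: complex^'n^'n)"
    using assms hurwitz_minus_one unfolding hurwitz_iff_invertible by blast+
  moreover have "s \<noteq> -1" using assms(2) by auto
  ultimately show ?thesis
    using resolvent_identity by (metis diff_minus_eq_add resolvent_minus_one)
qed

lemma resolvent_sylvester:
  assumes "X ** Q + Q ** Y + C = 0"
    and "invertible (mat (-s) - X)" and "invertible (mat s - Y)"
  shows "resolvent X (-s) ** C ** resolvent Y s = Q ** resolvent Y s + resolvent X (-s) ** Q"
proof -
  have "mat (-s) ** Q + Q ** mat s = 0"
    by (simp add: mat_mult_commute[of "-s"] mat_add flip: matrix_add_ldistrib)
  then have C: "C = (mat (-s) - X) ** Q + Q ** (mat s - Y)"
    using assms(1) by (simp add: matrix_diff_ldistrib matrix_diff_rdistrib algebra_simps eq_neg_iff_add_eq_0)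
  have "resolvent X (-s) ** C ** resolvent Y s
      = (resolvent X (-s) ** (mat (-s) - X)) ** Q ** resolvent Y s
        + resolvent X (-s) ** Q ** ((mat s - Y) ** resolvent Y s)"
    by (simp add: C matrix_add_ldistrib matrix_add_rdistrib matrix_mul_assoc)
  then show ?thesis
    using matrix_inv_left[OF assms(2)] matrix_inv_right[OF assms(3)]
    by (simp add: resolvent_def)
qed

lemma ctrans_tf:
  assumes "invertible (mat s - A)"
  shows "ctrans (tf A B C s) = ctrans B ** resolvent (ctrans A) (cnj s) ** ctrans C"
  unfolding tf_def resolvent_def
  by (simp add: ctrans_mult ctrans_matrix_inv[OF assms] ctrans_diff ctrans_mat matrix_mul_assoc)

section \<open>Size and holomorphy of resolvents\<close>

definition entrywise_norm :: "complex^'n^'m \<Rightarrow> real" where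
  "entrywise_norm M = (\<Sum>i\<in>UNIV. \<Sum>j\<in>UNIV. norm (M $ i $ j))"

lemma entrywise_norm_nonneg: "entrywise_norm M \<ge> 0"
  unfolding entrywise_norm_def by (intro sum_nonneg) auto

lemma norm_entry_le_entrywise_norm: "norm (M $ i $ j) \<le> entrywise_norm M"
proof -
  have "norm (M $ i $ j) \<le> (\<Sum>j\<in>UNIV. norm (M $ i $ j))"
    by (rule member_le_sum) auto
  also have "\<dots> \<le> entrywise_norm M"
    unfolding entrywise_norm_def by (rule member_le_sum) (auto intro: sum_nonneg)
  finally show ?thesis .
qed

lemma entrywise_norm_add: "entrywise_norm (A + B) \<le> entrywise_norm A + entrywise_norm B"
  unfolding entrywise_norm_def sum.distrib[symmetric] by (intro sum_mono) (simp add: norm_triangle_ineq)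

lemma entrywise_norm_mat_1: "entrywise_norm (mat 1 :: complex^'n^'n) = real CARD('n)"
  unfolding entrywise_norm_def mat_def by (simp add: if_distrib if_distribR sum.delta cong: if_cong)

lemma entrywise_norm_mult_mat: "entrywise_norm (M ** mat c) = norm c * entrywise_norm M"
  unfolding entrywise_norm_def by (simp add: matrix_mult_mat norm_mult sum_distrib_left mult.commute)

lemma entrywise_norm_mult:
  "entrywise_norm ((A::complex^'k^'n) ** (B::complex^'m^'k)) \<le> entrywise_norm A * entrywise_norm B"
proof -
  have "entrywise_norm (A ** B) \<le> (\<Sum>i\<in>UNIV. \<Sum>j\<in>UNIV. \<Sum>k\<in>UNIV. norm (A$i$k) * norm (B$k$j))"
    unfolding entrywise_norm_def matrix_matrix_mult_def
    by (simp, intro sum_mono order_trans[OF norm_sum]) (simp add: norm_mult)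
  also have "\<dots> = (\<Sum>i\<in>UNIV. \<Sum>k\<in>UNIV. norm (A$i$k) * (\<Sum>j\<in>UNIV. norm (B$k$j)))"
    by (simp add: sum_distrib_left sum.swap[of _ "UNIV::'m set"])
  also have "\<dots> \<le> (\<Sum>i\<in>UNIV. \<Sum>k\<in>UNIV. norm (A$i$k) * entrywise_norm B)"
    unfolding entrywise_norm_def
    by (intro sum_mono mult_left_mono member_le_sum) (auto intro: sum_nonneg)
  also have "\<dots> = entrywise_norm A * entrywise_norm B"
    by (simp add: entrywise_norm_def sum_distrib_right)
  finally show ?thesis .
qed

lemma entrywise_norm_resolvent_le:
  fixes X :: "complex^'n^'n"
  assumes "invertible (mat s - X)" and "2 * entrywise_norm X \<le> norm s" and "s \<noteq> 0"
  shows "entrywise_norm (resolvent X s) \<le> 2 * real CARD('n) / norm s"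
proof -
  let ?R = "resolvent X s"
  have "?R ** (mat s - X) = mat 1"
    unfolding resolvent_def by (rule matrix_inv_left[OF assms(1)])
  then have "?R ** mat s = mat 1 + ?R ** X"
    by (simp add: matrix_diff_ldistrib algebra_simps)
  then have "norm s * entrywise_norm ?R = entrywise_norm (mat 1 + ?R ** X)"
    by (metis entrywise_norm_mult_mat)
  also have "\<dots> \<le> real CARD('n) + entrywise_norm ?R * entrywise_norm X"
    using entrywise_norm_add[of "mat 1" "?R ** X"] entrywise_norm_mult[of ?R X]
    by (simp add: entrywise_norm_mat_1)
  also have "\<dots> \<le> real CARD('n) + entrywise_norm ?R * (norm s / 2)"
    using assms(2) entrywise_norm_nonneg[of ?R] by (intro add_left_mono mult_left_mono) auto
  finally have "entrywise_norm ?R * norm s \<le> 2 * real CARD('n)"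
    by (simp add: algebra_simps)
  then show ?thesis
    using assms(3) by (simp add: field_simps)
qed

lemma resolvent_product_decay:
  fixes X1 :: "complex^'a^'a" and X2 :: "complex^'b^'b"
    and M0 :: "complex^'a^'p" and M1 :: "complex^'b^'a" and M2 :: "complex^'q^'b"
  assumes "hurwitz X1" and "hurwitz X2"
  obtains R K where "0 \<le> K"
    and "\<And>s. 0 \<le> Re s \<Longrightarrow> R \<le> norm s \<Longrightarrow>
      entrywise_norm (M0 ** resolvent X1 s ** M1 ** resolvent X2 s ** M2) \<le> K / (norm s)^2"
proof
  let ?N = entrywise_norm
  define R where "R = max (2 * ?N X1) (2 * ?N X2) + 1"
  show "0 \<le> ?N M0 * (2 * real CARD('a)) * ?N M1 * (2 * real CARD('b)) * ?N M2"
    by (intro mult_nonneg_nonneg entrywise_norm_nonneg) auto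
  fix s assume "0 \<le> Re s" and "R \<le> norm s"
  then have "s \<noteq> 0" "0 < norm s" "2 * ?N X1 \<le> norm s" "2 * ?N X2 \<le> norm s"
    using entrywise_norm_nonneg[of X1] by (auto simp: R_def)
  moreover have "invertible (mat s - X1)" "invertible (mat s - X2)"
    using assms \<open>0 \<le> Re s\<close> by (simp_all add: hurwitz_iff_invertible)
  ultimately have R1: "?N (resolvent X1 s) \<le> 2 * real CARD('a) / norm s"
    and R2: "?N (resolvent X2 s) \<le> 2 * real CARD('b) / norm s"
    by (simp_all add: entrywise_norm_resolvent_le)
  have "?N (M0 ** resolvent X1 s ** M1 ** resolvent X2 s ** M2)
      \<le> ?N M0 * ?N (resolvent X1 s) * ?N M1 * ?N (resolvent X2 s) * ?N M2"
    by (intro order_trans[OF entrywise_norm_mult] mult_right_mono entrywise_norm_nonneg order_refl)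
  also have "\<dots> \<le> ?N M0 * (2 * real CARD('a) / norm s) * ?N M1 * (2 * real CARD('b) / norm s) * ?N M2"
    using R1 R2 by (intro mult_mono mult_right_mono mult_left_mono entrywise_norm_nonneg mult_nonneg_nonneg) auto
  also have "\<dots> = ?N M0 * (2 * real CARD('a)) * ?N M1 * (2 * real CARD('b)) * ?N M2 / (norm s)^2"
    by (simp add: power2_eq_square)
  finally show "?N (M0 ** resolvent X1 s ** M1 ** resolvent X2 s ** M2)
      \<le> ?N M0 * (2 * real CARD('a)) * ?N M1 * (2 * real CARD('b)) * ?N M2 / (norm s)^2" .
qed

lemma holomorphic_on_det:
  assumes "\<And>i j. (\<lambda>s. F s $ i $ j) holomorphic_on S"
  shows "(\<lambda>s. det (F s :: complex^'n^'n)) holomorphic_on S"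
  unfolding det_def by (intro holomorphic_intros assms)

lemma matrix_inv_entry_cramer:
  assumes "invertible (M::complex^'n^'n)"
  shows "matrix_inv M $ k $ j = det (\<chi> i l. if l = k then (if i = j then 1 else 0) else M $ i $ l) / det M"
proof -
  define x where "x = matrix_inv M *v axis j 1"
  have "M *v x = axis j 1"
    unfolding x_def by (simp add: matrix_vector_mul_assoc matrix_inv_right[OF assms])
  moreover have "det M \<noteq> 0"
    using assms invertible_det_nz by blast
  ultimately have "x = (\<chi> k. det (\<chi> i l. if l = k then axis j 1 $ i else M $ i $ l) / det M)"
    using cramer by blast
  moreover have "(\<chi> i l. if l = k then axis j 1 $ i else M $ i $ l)
      = (\<chi> i l. if l = k then (if i = j then 1 else 0) else M $ i $ l)"
    by (simp add: vec_eq_iff axis_def)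
  moreover have "x $ k = matrix_inv M $ k $ j"
    by (simp add: x_def matrix_vector_mult_def axis_def if_distrib if_distribR sum.delta' cong: if_cong)
  ultimately show ?thesis
    by simp
qed

lemma holomorphic_on_resolvent_entry:
  assumes "\<And>s. s \<in> S \<Longrightarrow> invertible (mat s - X)"
  shows "(\<lambda>s. resolvent X s $ k $ j) holomorphic_on S"
proof -
  have "(\<lambda>s. (mat s - X) $ i $ l) holomorphic_on S" for i l
    by (cases "i = l") (auto simp: mat_def intro!: holomorphic_intros)
  moreover have "(\<lambda>s. (\<chi> i l. if l = k then (if i = j then 1 else 0) else (mat s - X) $ i $ l) $ i' $ l')
      holomorphic_on S" for i' l'
    by (cases "l' = k"; cases "i' = l'") (auto simp: mat_def intro!: holomorphic_intros)
  ultimately have "(\<lambda>s. det (\<chi> i l. if l = k then (if i = j then 1 else 0) else (mat s - X) $ i $ l)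
      / det (mat s - X)) holomorphic_on S"
    using assms by (intro holomorphic_on_divide holomorphic_on_det) (auto simp: invertible_det_nz)
  then show ?thesis
    by (rule holomorphic_transform) (simp add: assms resolvent_def matrix_inv_entry_cramer)
qed

lemma holomorphic_on_matrix_mult_entry:
  assumes "\<And>i j. (\<lambda>s. A s $ i $ j) holomorphic_on S" and "\<And>i j. (\<lambda>s. B s $ i $ j) holomorphic_on S"
  shows "(\<lambda>s. (A s ** (B s :: complex^'p^'n)) $ i $ j) holomorphic_on S"
  unfolding matrix_matrix_mult_def by (simp, intro holomorphic_intros assms)

section \<open>Integrals along the imaginary axis\<close>

lemma has_integral_inverse_1_plus_square: "((\<lambda>x::real. inverse (1 + x^2)) has_integral pi) UNIV"
proof -
  have "integrable lborel (\<lambda>x::real. inverse (1 + x^2))"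
    using integrable_inverse_1_plus_square by (simp add: set_integrable_def)
  moreover have "integral\<^sup>L lborel (\<lambda>x::real. inverse (1 + x^2)) = pi"
    using LBINT_inverse_1_plus_square
    by (simp add: interval_lebesgue_integral_def set_lebesgue_integral_def)
  ultimately show ?thesis
    using has_integral_integral_lborel by metis
qed

lemma inverse_square_decay_imp_bound:
  fixes h :: "real \<Rightarrow> 'a::real_normed_vector"
  assumes "continuous_on UNIV h" and "K \<ge> 0"
    and decay: "\<And>x. R \<le> \<bar>x\<bar> \<Longrightarrow> norm (h x) \<le> K / x^2"
  obtains C where "\<And>x. norm (h x) \<le> C * inverse (1 + x^2)"
proof -
  define R' where "R' = max R 1"
  have "compact (h ` {-R'..R'})"
    by (intro compact_continuous_image continuous_on_subset[OF assms(1)]) auto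
  then obtain M where M_bound: "\<And>y. y \<in> h ` {-R'..R'} \<Longrightarrow> norm y \<le> M"
    by (meson bounded_iff compact_imp_bounded)
  have M: "norm (h x) \<le> M" if "\<bar>x\<bar> \<le> R'" for x
    using that by (intro M_bound imageI) (simp add: abs_le_iff)
  have "norm (h 0) \<le> M"
    by (rule M) (simp add: R'_def)
  then have "M \<ge> 0"
    by (rule order_trans[OF norm_ge_zero])
  have "norm (h x) \<le> (M * (1 + R'^2) + 2 * K) * inverse (1 + x^2)" for x
  proof (cases "\<bar>x\<bar> \<le> R'")
    case True
    then have "x^2 \<le> R'^2"
      by (metis abs_ge_zero power2_abs power_mono)
    then have "M * (1 + x^2) \<le> M * (1 + R'^2)"
      using \<open>M \<ge> 0\<close> by (intro mult_left_mono) auto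
    then have "M \<le> M * (1 + R'^2) * inverse (1 + x^2)"
      by (simp add: pos_le_divide_eq add_pos_nonneg field_simps)
    also have "\<dots> \<le> (M * (1 + R'^2) + 2 * K) * inverse (1 + x^2)"
      using \<open>K \<ge> 0\<close> by (intro mult_right_mono) auto
    finally show ?thesis using M[OF True] by linarith
  next
    case False
    then have "R \<le> \<bar>x\<bar>" and "1 \<le> \<bar>x\<bar>"
      by (auto simp: R'_def)
    then have "1 \<le> x^2"
      by (metis one_le_power power2_abs)
    have "norm (h x) \<le> K / x^2" using \<open>R \<le> \<bar>x\<bar>\<close> by (rule decay)
    also have "\<dots> \<le> 2 * K * inverse (1 + x^2)"
    proof -
      have "K * (1 + x^2) \<le> 2 * K * x^2"
        using mult_left_mono[OF \<open>1 \<le> x^2\<close> \<open>K \<ge> 0\<close>] by (simp add: algebra_simps)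
      moreover have "0 < x^2" "0 < 1 + x^2"
        using \<open>1 \<le> x^2\<close> by linarith+
      ultimately show ?thesis
        by (simp add: field_simps)
    qed
    also have "\<dots> \<le> (M * (1 + R'^2) + 2 * K) * inverse (1 + x^2)"
      using \<open>M \<ge> 0\<close> by (intro mult_right_mono) auto
    finally show ?thesis .
  qed
  then show ?thesis by (rule that)
qed

lemma has_integral_UNIV_of_symmetric_limit:
  fixes h :: "real \<Rightarrow> 'a::euclidean_space"
  assumes "continuous_on UNIV h"
    and bound: "\<And>x. norm (h x) \<le> C * inverse (1 + x^2)"
    and lim: "(\<lambda>n. integral {-real n..real n} h) \<longlonglongrightarrow> L"
  shows "(h has_integral L) UNIV"
proof -
  define f where "f n x = (if x \<in> {-real n..real n} then h x else 0)" for n x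
  have "h integrable_on {-real n..real n}" for n
    by (intro integrable_continuous_interval continuous_on_subset[OF assms(1)]) auto
  then have f_int: "f n integrable_on UNIV"
    and f_integral: "integral UNIV (f n) = integral {-real n..real n} h" for n
    unfolding f_def integrable_restrict_UNIV integral_restrict_UNIV by simp_all
  have dom_int: "(\<lambda>x. C * inverse (1 + x^2)) integrable_on UNIV"
    using has_integral_mult_right[OF has_integral_inverse_1_plus_square] by (auto simp: integrable_on_def)
  have dom: "norm (f n x) \<le> C * inverse (1 + x^2)" for n x
    using bound[of x] order_trans[OF norm_ge_zero bound[of x]] by (simp add: f_def)
  have conv: "(\<lambda>n. f n x) \<longlonglongrightarrow> h x" for x
  proof (rule tendsto_eventually)
    obtain N :: nat where "\<bar>x\<bar> \<le> real N" using real_arch_simple by blast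
    then show "\<forall>\<^sub>F n in sequentially. f n x = h x"
      unfolding eventually_sequentially f_def by (intro exI[of _ N]) auto
  qed
  have "h integrable_on UNIV" "(\<lambda>n. integral UNIV (f n)) \<longlonglongrightarrow> integral UNIV h"
    using dominated_convergence[OF f_int dom_int dom conv] by auto
  moreover from this(2) have "integral UNIV h = L"
    using lim LIMSEQ_unique by (simp add: f_integral)
  ultimately show ?thesis
    using has_integral_integrable_integral by blast
qed

lemma path_image_right_half_circle:
  assumes "0 \<le> T"
  shows "path_image (part_circlepath 0 T (-pi/2) (pi/2)) \<subseteq> {s. 0 \<le> Re s}"
proof
  fix w assume "w \<in> path_image (part_circlepath 0 T (-pi/2) (pi/2))"
  then obtain x where x: "-pi/2 \<le> x" "x \<le> pi/2" "w = of_real T * exp (\<i> * of_real x)"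
    by (auto simp: path_image_part_circlepath)
  have "cos x \<ge> 0" using x by (intro cos_ge_zero) auto
  then show "w \<in> {s. 0 \<le> Re s}" using x assms by (simp flip: cis_conv_exp)
qed

lemma imaginary_axis_integral_eq_arc:
  fixes f :: "complex \<Rightarrow> complex"
  assumes hol: "f holomorphic_on {s. 0 \<le> Re s}" and "0 < T"
  shows "integral {-T..T} (\<lambda>x. f (\<i> * of_real x))
    = - \<i> * contour_integral (part_circlepath 0 T (-pi/2) (pi/2)) f"
proof -
  let ?H = "{s. 0 \<le> Re s}"
  let ?c = "part_circlepath 0 T (-pi/2) (pi/2)" and ?l = "linepath (\<i> * of_real T) (- \<i> * of_real T)"
  have "exp (\<i> * of_real (pi/2)) = \<i>" "exp (\<i> * of_real (-pi/2)) = -\<i>"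
    by (metis cis_conv_exp cis_pi_half) (metis cis_conv_exp cis_minus_pi_half minus_divide_left)
  then have ends: "pathstart ?c = - \<i> * of_real T" "pathfinish ?c = \<i> * of_real T"
    by (simp_all add: mult.commute)
  have arc: "path_image ?c \<subseteq> ?H"
    using \<open>0 < T\<close> by (intro path_image_right_half_circle) simp
  have line: "path_image ?l \<subseteq> ?H"
    by (auto simp: closed_segment_def)
  have cont: "continuous_on ?H f"
    using hol by (rule holomorphic_on_imp_continuous_on)
  obtain c1 where c1: "(f has_contour_integral c1) ?c"
    using contour_integrable_continuous_part_circlepath[OF continuous_on_subset[OF cont arc]]
    by (auto simp: contour_integrable_on_def)
  obtain c2 where c2: "(f has_contour_integral c2) ?l"
    using contour_integrable_continuous_linepath[OF continuous_on_subset[OF cont line[unfolded path_image_linepath]]]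
    by (auto simp: contour_integrable_on_def)
  have "(f has_contour_integral 0) (?c +++ ?l)"
  proof (rule Cauchy_theorem_convex_simple[OF hol convex_halfspace_Re_ge])
    show "valid_path (?c +++ ?l)" using ends by (intro valid_path_join) auto
    show "path_image (?c +++ ?l) \<subseteq> ?H" using ends arc line by (subst path_image_join) auto
    show "pathfinish (?c +++ ?l) = pathstart (?c +++ ?l)" using ends by simp
  qed
  moreover have "(f has_contour_integral (c1 + c2)) (?c +++ ?l)"
    using ends by (intro has_contour_integral_join[OF c1 c2]) auto
  ultimately have "0 = c1 + c2"
    by (rule has_contour_integral_unique)
  then have "c2 = - c1"
    by (simp add: eq_neg_iff_add_eq_0 add.commute)
  then have "(f has_contour_integral c1) (linepath (- \<i> * of_real T) (\<i> * of_real T))"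
    using has_contour_integral_reverse_linepath[OF c2] by simp
  then have "((\<lambda>x. f (Complex 0 x)) has_integral (- \<i> * c1)) {-T..T}"
    using \<open>0 < T\<close> by (subst (asm) has_contour_integral_linepath_same_Re_iff[where c=0 and a="-T" and b=T]) auto
  moreover have "(\<lambda>x. f (Complex 0 x)) = (\<lambda>x. f (\<i> * of_real x))"
    by (rule ext, rule arg_cong[where f=f]) (simp add: complex_eq_iff)
  ultimately show ?thesis
    using contour_integral_unique[OF c1] by (simp add: integral_unique)
qed

lemma imaginary_axis_segment_integral_bound:
  fixes f :: "complex \<Rightarrow> complex"
  assumes hol: "f holomorphic_on {s. 0 \<le> Re s}" and "0 \<le> K"
    and decay: "\<And>s. 0 \<le> Re s \<Longrightarrow> R \<le> norm s \<Longrightarrow> norm (f s) \<le> K / (norm s)^2"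
    and "R \<le> T" and "0 < T"
  shows "norm (integral {-T..T} (\<lambda>x. f (\<i> * of_real x))) \<le> K * pi / T"
proof -
  let ?c = "part_circlepath 0 T (-pi/2) (pi/2)"
  have arc: "path_image ?c \<subseteq> {s. 0 \<le> Re s}"
    using \<open>0 < T\<close> by (intro path_image_right_half_circle) simp
  have "f contour_integrable_on ?c"
    by (rule contour_integrable_continuous_part_circlepath
        [OF continuous_on_subset[OF holomorphic_on_imp_continuous_on[OF hol] arc]])
  then have "(f has_contour_integral contour_integral ?c f) ?c"
    by (rule has_contour_integral_integral)
  then have bound: "norm (contour_integral ?c f) \<le> K / T^2 * T * (pi/2 - (-pi/2))"
  proof (rule has_contour_integral_bound_part_circlepath)
    fix s assume s: "s \<in> path_image ?c"
    then have "norm s = T"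
      using in_path_image_part_circlepath[OF s] \<open>0 < T\<close> by simp
    moreover have "0 \<le> Re s"
      using arc s by auto
    ultimately show "norm (f s) \<le> K / T^2"
      using decay[of s] \<open>R \<le> T\<close> by simp
  qed (use \<open>0 \<le> K\<close> \<open>0 < T\<close> in auto)
  have "norm (integral {-T..T} (\<lambda>x. f (\<i> * of_real x))) = norm (contour_integral ?c f)"
    by (simp add: imaginary_axis_integral_eq_arc[OF hol \<open>0 < T\<close>] norm_mult)
  also have "\<dots> \<le> K / T^2 * T * (pi/2 - (-pi/2))"
    by (rule bound)
  also have "\<dots> = K * pi / T"
    using \<open>0 < T\<close> by (simp add: power2_eq_square)
  finally show ?thesis .
qed

lemma has_integral_imaginary_axis_zero:
  fixes f :: "complex \<Rightarrow> complex"
  assumes hol: "f holomorphic_on {s. 0 \<le> Re s}" and "0 \<le> K"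
    and decay: "\<And>s. 0 \<le> Re s \<Longrightarrow> R \<le> norm s \<Longrightarrow> norm (f s) \<le> K / (norm s)^2"
  shows "((\<lambda>x. f (\<i> * of_real x)) has_integral 0) UNIV"
    and "((\<lambda>x. f (- (\<i> * of_real x))) has_integral 0) UNIV"
proof -
  define h where "h = (\<lambda>x. f (\<i> * of_real x))"
  have cont: "continuous_on UNIV h"
    unfolding h_def using holomorphic_on_imp_continuous_on[OF hol]
    by (rule continuous_on_compose2) (auto intro!: continuous_intros)
  have "norm (h x) \<le> K / x^2" if "R \<le> \<bar>x\<bar>" for x
    using decay[of "\<i> * of_real x"] that by (simp add: h_def norm_mult)
  then obtain C where C: "\<And>x. norm (h x) \<le> C * inverse (1 + x^2)"
    using inverse_square_decay_imp_bound[OF cont \<open>0 \<le> K\<close>] by blast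
  have lim: "(\<lambda>n. integral {-real n..real n} h) \<longlonglongrightarrow> 0"
  proof (rule Lim_null_comparison)
    obtain N :: nat where N: "max R 1 \<le> real N"
      using real_arch_simple by blast
    have "norm (integral {-real n..real n} h) \<le> K * pi * inverse (real n)" if "N \<le> n" for n
      using imaginary_axis_segment_integral_bound[where R=R and T="real n", OF hol \<open>0 \<le> K\<close> decay] N that
      by (simp add: h_def divide_inverse)
    then show "\<forall>\<^sub>F n in sequentially. norm (integral {-real n..real n} h) \<le> K * pi * inverse (real n)"
      unfolding eventually_sequentially by blast
    show "(\<lambda>n. K * pi * inverse (real n)) \<longlonglongrightarrow> 0"
      by (rule tendsto_mult_right_zero[OF lim_inverse_n])
  qed
  have "(h has_integral 0) UNIV"
    using cont C lim by (rule has_integral_UNIV_of_symmetric_limit)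
  then show "((\<lambda>x. f (\<i> * of_real x)) has_integral 0) UNIV"
    by (simp add: h_def)
  have "continuous_on UNIV (\<lambda>x. h (-x))"
    by (rule continuous_on_compose2[OF cont]) (auto intro!: continuous_intros)
  moreover have "norm (h (-x)) \<le> C * inverse (1 + x^2)" for x
    using C[of "-x"] by simp
  moreover have "integral {-real n..real n} (\<lambda>x. h (-x)) = integral {-real n..real n} h" for n
    using Henstock_Kurzweil_Integration.integral_reflect_real[of "real n" "- real n" h] by simp
  ultimately have "((\<lambda>x. h (-x)) has_integral 0) UNIV"
    using lim by (intro has_integral_UNIV_of_symmetric_limit) auto
  then show "((\<lambda>x. f (- (\<i> * of_real x))) has_integral 0) UNIV"
    by (simp add: h_def)
qed

lemma has_integral_vec_componentwise:
  fixes f :: "'a::euclidean_space \<Rightarrow> 'b::euclidean_space^'n"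
  assumes "\<And>i. ((\<lambda>x. f x $ i) has_integral y $ i) S"
  shows "(f has_integral y) S"
proof (subst has_integral_componentwise_iff, intro ballI)
  fix b :: "'b^'n" assume "b \<in> Basis"
  then obtain i u where b: "b = axis i u" "u \<in> Basis"
    by (auto simp: Basis_vec_def)
  have "((\<lambda>x. f x $ i \<bullet> u) has_integral y $ i \<bullet> u) S"
    using assms[of i] b(2) by (subst (asm) has_integral_componentwise_iff) auto
  then show "((\<lambda>x. f x \<bullet> b) has_integral y \<bullet> b) S"
    by (simp add: b inner_axis)
qed

lemma has_integral_resolvent_product_zero:
  fixes X1 :: "complex^'a^'a" and X2 :: "complex^'b^'b"
    and M0 :: "complex^'a^'p" and M1 :: "complex^'b^'a" and M2 :: "complex^'q^'b"
  assumes "hurwitz X1" and "hurwitz X2"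
  shows "((\<lambda>x. M0 ** resolvent X1 (\<i> * of_real x) ** M1 ** resolvent X2 (\<i> * of_real x) ** M2)
      has_integral 0) UNIV"
    and "((\<lambda>x. M0 ** resolvent X1 (- (\<i> * of_real x)) ** M1 ** resolvent X2 (- (\<i> * of_real x)) ** M2)
      has_integral 0) UNIV"
proof -
  define F where "F s = M0 ** resolvent X1 s ** M1 ** resolvent X2 s ** M2" for s
  have inv: "invertible (mat s - X1)" "invertible (mat s - X2)" if "s \<in> {s. 0 \<le> Re s}" for s
    using assms that by (simp_all add: hurwitz_iff_invertible)
  have const: "(\<lambda>s. (M::complex^'u^'v) $ i $ j) holomorphic_on S" for M i j and S :: "complex set"
    by simp
  have "(\<lambda>s. F s $ i $ j) holomorphic_on {s. 0 \<le> Re s}" for i j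
    unfolding F_def
    by (intro holomorphic_on_matrix_mult_entry holomorphic_on_resolvent_entry const inv)
  moreover obtain R K where "0 \<le> K"
    and decay: "\<And>s. 0 \<le> Re s \<Longrightarrow> R \<le> norm s \<Longrightarrow> entrywise_norm (F s) \<le> K / (norm s)^2"
    unfolding F_def using resolvent_product_decay[OF assms] by blast
  ultimately have "((\<lambda>x. F (\<i> * of_real x) $ i $ j) has_integral 0) UNIV
      \<and> ((\<lambda>x. F (- (\<i> * of_real x)) $ i $ j) has_integral 0) UNIV" for i j
    using has_integral_imaginary_axis_zero[where f="\<lambda>s. F s $ i $ j"]
      order_trans[OF norm_entry_le_entrywise_norm decay] by blast
  then show "((\<lambda>x. M0 ** resolvent X1 (\<i> * of_real x) ** M1 ** resolvent X2 (\<i> * of_real x) ** M2)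
      has_integral 0) UNIV"
    and "((\<lambda>x. M0 ** resolvent X1 (- (\<i> * of_real x)) ** M1 ** resolvent X2 (- (\<i> * of_real x)) ** M2)
      has_integral 0) UNIV"
    unfolding F_def[symmetric] by (auto intro!: has_integral_vec_componentwise)
qed

section \<open>The integrand on the imaginary axis\<close>

context
  fixes A1 :: "complex^'n1^'n1" and B1 :: "complex^'m1^'n1" and C1 :: "complex^'n1^'p"
    and A2 :: "complex^'n2^'n2" and B2 :: "complex^'m^'n2" and C2 :: "complex^'n2^'p"
    and A3 :: "complex^'n3^'n3" and B3 :: "complex^'m^'n3" and C3 :: "complex^'n3^'p3"
    and Q :: "complex^'n2^'n1" and P :: "complex^'n3^'n2"
  assumes hurwitz_A1: "hurwitz A1" and hurwitz_A2: "hurwitz A2" and hurwitz_A3: "hurwitz A3"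
    and sylvester_Q: "ctrans A1 ** Q + Q ** A2 + ctrans C1 ** C2 = 0"
    and sylvester_P: "A2 ** P + P ** ctrans A3 + B2 ** ctrans B3 = 0"
begin

lemma transfer_product_resolvent_form:
  assumes "Re s = 0"
  shows "ctrans (tf A1 B1 C1 s) ** tf A2 B2 C2 s ** ctrans (tf A3 B3 C3 s)
    = ctrans B1 ** (Q ** P ** resolvent (ctrans A3) (-s) + Q ** resolvent A2 s ** P
        + resolvent (ctrans A1) (-s) ** Q ** (B2 ** ctrans B3) ** resolvent (ctrans A3) (-s))
      ** ctrans C3"
proof -
  let ?S1 = "resolvent (ctrans A1) (-s)" and ?R2 = "resolvent A2 s"
    and ?S3 = "resolvent (ctrans A3) (-s)"
  have cnj_s: "cnj s = -s" using assms by (simp add: complex_eq_iff)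
  have inv: "invertible (mat z - A)" "invertible (mat z - ctrans A)"
    if "hurwitz A" "Re z = 0" for z and A :: "complex^'k^'k"
    using that hurwitz_ctrans[OF that(1)] by (simp_all add: hurwitz_iff_invertible)
  have F1: "ctrans (tf A1 B1 C1 s) = ctrans B1 ** ?S1 ** ctrans C1"
    using ctrans_tf[OF inv(1)[OF hurwitz_A1 assms]] cnj_s by simp
  have F2: "tf A2 B2 C2 s = C2 ** ?R2 ** B2"
    by (simp add: tf_def resolvent_def)
  have F3: "ctrans (tf A3 B3 C3 s) = ctrans B3 ** ?S3 ** ctrans C3"
    using ctrans_tf[OF inv(1)[OF hurwitz_A3 assms]] cnj_s by simp
  have left: "?S1 ** (ctrans C1 ** C2) ** ?R2 = Q ** ?R2 + ?S1 ** Q"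
    using resolvent_sylvester[OF sylvester_Q] assms hurwitz_A1 hurwitz_A2 by (simp add: inv)
  have right: "?R2 ** (B2 ** ctrans B3) ** ?S3 = P ** ?S3 + ?R2 ** P"
    using resolvent_sylvester[OF sylvester_P, of "-s"] assms hurwitz_A2 hurwitz_A3 by (simp add: inv)
  have "ctrans (tf A1 B1 C1 s) ** tf A2 B2 C2 s ** ctrans (tf A3 B3 C3 s)
      = ctrans B1 ** (?S1 ** (ctrans C1 ** C2) ** ?R2) ** (B2 ** ctrans B3) ** ?S3 ** ctrans C3"
    by (simp add: F1 F2 F3 matrix_mul_assoc)
  also have "\<dots> = ctrans B1 ** (Q ** (?R2 ** (B2 ** ctrans B3) ** ?S3)
      + ?S1 ** Q ** (B2 ** ctrans B3) ** ?S3) ** ctrans C3"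
    unfolding left by (simp add: matrix_add_ldistrib matrix_add_rdistrib matrix_mul_assoc)
  also have "\<dots> = ctrans B1 ** (Q ** P ** ?S3 + Q ** ?R2 ** P
      + ?S1 ** Q ** (B2 ** ctrans B3) ** ?S3) ** ctrans C3"
    unfolding right by (simp add: matrix_add_ldistrib matrix_add_rdistrib matrix_mul_assoc)
  finally show ?thesis .
qed

lemma transfer_product_decomposition:
  assumes "Re s = 0"
  shows "ctrans (tf A1 B1 C1 s) ** tf A2 B2 C2 s ** ctrans (tf A3 B3 C3 s)
    = (2 / (1 + (Im s)^2)) *\<^sub>R (ctrans B1 ** Q ** P ** ctrans C3)
      + ctrans B1 ** Q ** resolvent A2 s ** (A2 + mat 1) ** resolvent (- mat 1) s ** (P ** ctrans C3)
      + ctrans B1 ** Q ** P ** resolvent (ctrans A3) (-s) ** (ctrans A3 + mat 1)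
          ** resolvent (- mat 1) (-s) ** ctrans C3
      + ctrans B1 ** resolvent (ctrans A1) (-s) ** (Q ** (B2 ** ctrans B3))
          ** resolvent (ctrans A3) (-s) ** ctrans C3"
proof -
  let ?R2 = "resolvent A2 s" and ?S3 = "resolvent (ctrans A3) (-s)"
  let ?E2 = "(A2 + mat 1) ** resolvent (- mat 1) s"
    and ?E3 = "(ctrans A3 + mat 1) ** resolvent (- mat 1) (-s)"
  define r where "r = 2 / (1 + (Im s)^2)"
  have split_R2: "Q ** ?R2 ** P = Q ** P ** mat (1 / (s + 1)) + Q ** ?R2 ** ?E2 ** P"
  proof -
    have "?R2 = mat (1 / (s + 1)) + ?R2 ** (A2 + mat 1) ** resolvent (- mat 1) s"
      by (rule hurwitz_resolvent_split[OF hurwitz_A2]) (simp add: assms)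
    then have "Q ** ?R2 ** P = Q ** (mat (1 / (s + 1)) + ?R2 ** (A2 + mat 1) ** resolvent (- mat 1) s) ** P"
      by (rule arg_cong[where f="\<lambda>Z. Q ** Z ** P"])
    also have "\<dots> = Q ** mat (1 / (s + 1)) ** P + Q ** ?R2 ** ?E2 ** P"
      by (simp add: matrix_add_ldistrib matrix_add_rdistrib matrix_mul_assoc)
    finally show ?thesis by (simp only: matrix_mult_mat_commute)
  qed
  have split_S3: "Q ** P ** ?S3 = Q ** P ** mat (1 / (- s + 1)) + Q ** P ** ?S3 ** ?E3"
  proof -
    have "?S3 = mat (1 / (- s + 1)) + ?S3 ** (ctrans A3 + mat 1) ** resolvent (- mat 1) (-s)"
      by (rule hurwitz_resolvent_split[OF hurwitz_ctrans[OF hurwitz_A3]]) (simp add: assms)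
    then have "Q ** P ** ?S3
        = Q ** P ** (mat (1 / (- s + 1)) + ?S3 ** (ctrans A3 + mat 1) ** resolvent (- mat 1) (-s))"
      by (rule arg_cong[where f="\<lambda>Z. Q ** P ** Z"])
    also have "\<dots> = Q ** P ** mat (1 / (- s + 1)) + Q ** P ** ?S3 ** ?E3"
      by (simp add: matrix_add_ldistrib matrix_mul_assoc)
    finally show ?thesis .
  qed
  have "1 / (- s + 1) + 1 / (s + 1) = of_real r"
  proof -
    have "(1 - s) * (1 + s) = of_real (1 + (Im s)^2)" "1 - s \<noteq> 0" "1 + s \<noteq> 0"
      using assms by (auto simp: complex_eq_iff power2_eq_square algebra_simps)
    then show ?thesis by (simp add: r_def field_simps)
  qed
  then have scalar: "Q ** P ** mat (of_real r) = Q ** P ** mat (1 / (- s + 1)) + Q ** P ** mat (1 / (s + 1))"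
    unfolding matrix_add_ldistrib[symmetric] mat_add by simp
  have "Q ** P ** ?S3 + Q ** ?R2 ** P
      = (Q ** P ** mat (1 / (- s + 1)) + Q ** P ** ?S3 ** ?E3)
        + (Q ** P ** mat (1 / (s + 1)) + Q ** ?R2 ** ?E2 ** P)"
    using split_S3 split_R2 by (rule arg_cong2[where f="(+)"])
  also have "\<dots> = Q ** P ** mat (of_real r) + Q ** ?R2 ** ?E2 ** P + Q ** P ** ?S3 ** ?E3"
    unfolding scalar by (simp only: add_ac)
  finally have sum: "Q ** P ** ?S3 + Q ** ?R2 ** P
      = Q ** P ** mat (of_real r) + Q ** ?R2 ** ?E2 ** P + Q ** P ** ?S3 ** ?E3" .
  have "ctrans B1 ** (Q ** P ** mat (of_real r)) ** ctrans C3
      = ctrans B1 ** Q ** P ** (mat (of_real r) ** ctrans C3)"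
    by (simp only: matrix_mul_assoc)
  also have "\<dots> = r *\<^sub>R (ctrans B1 ** Q ** P ** ctrans C3)"
    by (simp only: mat_of_real_mult matrix_scalar_ac scalar_matrix_assoc)
  finally show ?thesis
    unfolding transfer_product_resolvent_form[OF assms] sum
    by (simp add: r_def matrix_add_ldistrib matrix_add_rdistrib matrix_mul_assoc)
qed

end

theorem lemmaB1:
  fixes A1 :: "complex^'n1^'n1" and B1 :: "complex^'m1^'n1" and C1 :: "complex^'n1^'p"
    and A2 :: "complex^'n2^'n2" and B2 :: "complex^'m^'n2" and C2 :: "complex^'n2^'p"
    and A3 :: "complex^'n3^'n3" and B3 :: "complex^'m^'n3" and C3 :: "complex^'n3^'p3"
    and Q12 :: "complex^'n2^'n1" and P23 :: "complex^'n3^'n2"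
  assumes "hurwitz A1" and "hurwitz A2" and "hurwitz A3"
    and "ctrans A1 ** Q12 + Q12 ** A2 + ctrans C1 ** C2 = 0"
    and "A2 ** P23 + P23 ** ctrans A3 + B2 ** ctrans B3 = 0"
  shows "((\<lambda>x::real. (1 / (2 * pi)) *\<^sub>R
            (ctrans (tf A1 B1 C1 (\<i> * of_real x)) ** tf A2 B2 C2 (\<i> * of_real x)
               ** ctrans (tf A3 B3 C3 (\<i> * of_real x))))
          has_integral (ctrans B1 ** Q12 ** P23 ** ctrans C3)) UNIV"
proof -
  define N where "N = ctrans B1 ** Q12 ** P23 ** ctrans C3"
  have hurwitz_adjoints: "hurwitz (ctrans A1)" "hurwitz (ctrans A3)"
    using assms by (simp_all add: hurwitz_ctrans)
  have "((\<lambda>x. (2 / (1 + x^2)) *\<^sub>R N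
      + ctrans B1 ** Q12 ** resolvent A2 (\<i> * of_real x) ** (A2 + mat 1)
          ** resolvent (- mat 1) (\<i> * of_real x) ** (P23 ** ctrans C3)
      + ctrans B1 ** Q12 ** P23 ** resolvent (ctrans A3) (- (\<i> * of_real x)) ** (ctrans A3 + mat 1)
          ** resolvent (- mat 1) (- (\<i> * of_real x)) ** ctrans C3
      + ctrans B1 ** resolvent (ctrans A1) (- (\<i> * of_real x)) ** (Q12 ** (B2 ** ctrans B3))
          ** resolvent (ctrans A3) (- (\<i> * of_real x)) ** ctrans C3)
    has_integral ((2 * pi) *\<^sub>R N + 0 + 0 + 0)) UNIV"
  proof (intro has_integral_add)
    show "((\<lambda>x. (2 / (1 + x^2)) *\<^sub>R N) has_integral (2 * pi) *\<^sub>R N) UNIV"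
      using has_integral_mult_right[OF has_integral_inverse_1_plus_square, of 2]
      by (intro has_integral_scaleR_left) (simp add: divide_inverse)
  qed (intro has_integral_resolvent_product_zero hurwitz_minus_one hurwitz_adjoints assms)+
  then have "((\<lambda>x. ctrans (tf A1 B1 C1 (\<i> * of_real x)) ** tf A2 B2 C2 (\<i> * of_real x)
      ** ctrans (tf A3 B3 C3 (\<i> * of_real x))) has_integral (2 * pi) *\<^sub>R N) UNIV"
    by (simp add: transfer_product_decomposition[OF assms] N_def)
  from has_integral_cmul[OF this, of "1 / (2 * pi)"] show ?thesis
    by (simp add: N_def)
qed

end
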